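(* Suppose Algorithm SC is run on a source function $b$ with $|b(v)|\le\deg(v)$ for all $v$, with $\alpha\in(0,1/4]$ and $T$ satisfying $\alpha^2T\ge\ln(2n+5Tn^2)$, and completes all $T$ rounds without terminating in step (4). Then $|b(v)-(B\bar f)_v|\le5\alpha\deg(v)$ for every $v\in V$.
   Context: Let $G=(V,E)$ be a unit-capacity undirected graph, $n=|V|\ge3$, every vertex of degree $\deg(v)\ge1$, each edge with a fixed arbitrary orientation; $B\in\mathbb R^{V\times E}$ is the incidence matrix (column $(u,v)$ has $+1$ in row $u$, $-1$ in row $v$, $0$ elsewhere). Algorithm SC takes $b\in\mathbb R^V$ with $|b(v)|\le\deg(v)$ for all $v$, $\alpha\in(0,1/4]$ and an integer $T\ge1$. Set $w^1_{v,+}=w^1_{v,-}=1$ for all $v$. For $i=1,\dots,T$: (1) for $\circ\in\{+,-\}$, $\tilde w^i_{v,\circ}=w^i_{v,\circ}$ if $w^i_{v,\circ}\ge n$ and $\tilde w^i_{v,\circ}=0$ otherwise; (2) $\tilde\phi^i_v=(\tilde w^i_{v,+}-\tilde w^i_{v,-})/\deg(v)$; (3) for each edge $(u,v)$, $f^i(u,v)=+1$ if $\tilde\phi^i_u>\tilde\phi^i_v$, $-1$ if $\tilde\phi^i_u<\tilde\phi^i_v$, $0$ otherwise; (4) if $\langle\tilde\phi^i,b\rangle>\langle\tilde\phi^i,Bf^i\rangle$, terminate; (5) $r^i_v=(b(v)-(Bf^i)_v)/\deg(v)$; (6) $w^{i+1}_{v,+}=w^i_{v,+}(1+\alpha r^i_v)$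 and $w^{i+1}_{v,-}=w^i_{v,-}(1-\alpha r^i_v)$. If all $T$ rounds complete, output $\bar f=\frac1T\sum_{i=1}^Tf^i$. *)

theory Defs
  imports Complex_Main
begin

text \<open>Graph: finite vertex set V, oriented edge set E (each undirected edge listed once,
  as an ordered pair (u,v) giving its fixed orientation).\<close>

definition deg :: "('a \<times> 'a) set \<Rightarrow> 'a \<Rightarrow> nat" where
  "deg E v = card {e \<in> E. fst e = v \<or> snd e = v}"

text \<open>(B f)_v for the incidence matrix B: column (u,v) has +1 in row u and -1 in row v.\<close>
definition inc_mult :: "('a \<times> 'a) set \<Rightarrow> ('a \<times> 'a \<Rightarrow> real) \<Rightarrow> 'a \<Rightarrow> real" where
  "inc_mult E f v = (\<Sum>e\<in>E. (if fst e = v then f e else 0) - (if snd e = v then f e else 0))"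

definition vinner :: "'a set \<Rightarrow> ('a \<Rightarrow> real) \<Rightarrow> ('a \<Rightarrow> real) \<Rightarrow> real" where
  "vinner V x y = (\<Sum>v\<in>V. x v * y v)"

definition trunc_w :: "nat \<Rightarrow> real \<Rightarrow> real" where
  "trunc_w n x = (if x \<ge> real n then x else 0)"

text \<open>Weights w = (w_+, w_-). Step (2): potential.\<close>
definition sc_phi :: "'a set \<Rightarrow> ('a \<times> 'a) set \<Rightarrow> ('a \<Rightarrow> real) \<times> ('a \<Rightarrow> real) \<Rightarrow> 'a \<Rightarrow> real" where
  "sc_phi V E w v = (trunc_w (card V) (fst w v) - trunc_w (card V) (snd w v)) / real (deg E v)"

definition sc_flow :: "('a \<Rightarrow> real) \<Rightarrow> 'a \<times> 'a \<Rightarrow> real" where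
  "sc_flow phi e = (if phi (fst e) > phi (snd e) then 1
                    else if phi (fst e) < phi (snd e) then -1 else 0)"

definition sc_res :: "'a set \<Rightarrow> ('a \<times> 'a) set \<Rightarrow> ('a \<Rightarrow> real) \<Rightarrow> ('a \<Rightarrow> real) \<times> ('a \<Rightarrow> real) \<Rightarrow> 'a \<Rightarrow> real" where
  "sc_res V E b w v = (b v - inc_mult E (sc_flow (sc_phi V E w)) v) / real (deg E v)"

definition sc_step :: "'a set \<Rightarrow> ('a \<times> 'a) set \<Rightarrow> ('a \<Rightarrow> real) \<Rightarrow> real
    \<Rightarrow> ('a \<Rightarrow> real) \<times> ('a \<Rightarrow> real) \<Rightarrow> ('a \<Rightarrow> real) \<times> ('a \<Rightarrow> real)" where
  "sc_step V E b \<alpha> w =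
     ((\<lambda>v. fst w v * (1 + \<alpha> * sc_res V E b w v)),
      (\<lambda>v. snd w v * (1 - \<alpha> * sc_res V E b w v)))"

text \<open>w^i for i \<ge> 1 (w^1 = all ones).\<close>
definition sc_w :: "'a set \<Rightarrow> ('a \<times> 'a) set \<Rightarrow> ('a \<Rightarrow> real) \<Rightarrow> real \<Rightarrow> nat
    \<Rightarrow> ('a \<Rightarrow> real) \<times> ('a \<Rightarrow> real)" where
  "sc_w V E b \<alpha> i = (sc_step V E b \<alpha> ^^ (i - 1)) ((\<lambda>v. 1), (\<lambda>v. 1))"

definition sc_phi_i :: "'a set \<Rightarrow> ('a \<times> 'a) set \<Rightarrow> ('a \<Rightarrow> real) \<Rightarrow> real \<Rightarrow> nat \<Rightarrow> 'a \<Rightarrow> real" where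
  "sc_phi_i V E b \<alpha> i = sc_phi V E (sc_w V E b \<alpha> i)"

definition sc_f :: "'a set \<Rightarrow> ('a \<times> 'a) set \<Rightarrow> ('a \<Rightarrow> real) \<Rightarrow> real \<Rightarrow> nat \<Rightarrow> 'a \<times> 'a \<Rightarrow> real" where
  "sc_f V E b \<alpha> i = sc_flow (sc_phi_i V E b \<alpha> i)"

definition sc_terminates_at :: "'a set \<Rightarrow> ('a \<times> 'a) set \<Rightarrow> ('a \<Rightarrow> real) \<Rightarrow> real \<Rightarrow> nat \<Rightarrow> bool" where
  "sc_terminates_at V E b \<alpha> i =
     (vinner V (sc_phi_i V E b \<alpha> i) b > vinner V (sc_phi_i V E b \<alpha> i) (inc_mult E (sc_f V E b \<alpha> i)))"

definition sc_fbar :: "'a set \<Rightarrow> ('a \<times> 'a) set \<Rightarrow> ('a \<Rightarrow> real) \<Rightarrow> real \<Rightarrow> nat \<Rightarrow> 'a \<times> 'a \<Rightarrow> real" where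
  "sc_fbar V E b \<alpha> T e = (\<Sum>i=1..T. sc_f V E b \<alpha> i e) / real T"

end

theory Submission imports Defs begin

text \<open>A multiplicative-weights argument. Writing \<open>r\<^sup>i\<close> for the residual of round \<open>i\<close>,
  the weight \<open>w\<^sub>v\<^sub>,\<^sub>\<plusminus>\<close> after \<open>T\<close> rounds is \<open>\<Prod>\<^sub>i (1 \<plusminus> \<alpha> r\<^sup>i\<^sub>v)\<close>
  with \<open>|\<alpha> r\<^sup>i\<^sub>v| \<le> 1/2\<close>, so its logarithm is at least
  \<open>\<plusminus>\<alpha> \<Sum>\<^sub>i r\<^sup>i\<^sub>v - 4\<alpha>\<^sup>2T\<close>. Conversely, the change of the total weight in one round is
  \<open>\<alpha> \<Sum>\<^sub>v r\<^sub>v (w\<^sub>v\<^sub>,\<^sub>+ - w\<^sub>v\<^sub>,\<^sub>-)\<close>; with the truncated weights in place of \<open>w\<close>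
  this is \<open>\<alpha> \<langle>\<phi>, b - Bf\<rangle> \<le> 0\<close> by non-termination, and truncation changes each weight by
  less than \<open>n\<close>. Hence the total weight stays below \<open>2n + 5Tn\<^sup>2\<close>, the hypothesis on
  \<open>T\<close> gives \<open>|\<Sum>\<^sub>i r\<^sup>i\<^sub>v| \<le> 5\<alpha>T\<close>, and \<open>b(v) - (B f\<^bsub>bar\<^esub>)\<^sub>v\<close> is
  \<open>deg(v)/T\<close> times this sum.\<close>

lemma ln_one_plus_ge_minus_square:
  fixes y :: real
  assumes "\<bar>y\<bar> \<le> 1/2"
  shows "y - y^2 \<le> ln (1 + y)"
proof (cases "y \<ge> 0")
  case True
  then show ?thesis using assms ln_one_plus_pos_lower_bound[of y] by simp
next
  case False
  let ?h = "\<lambda>x::real. ln (1 + x) - x + x^2"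
  have "y \<le> 0" using False by simp
  have "?h 0 \<le> ?h y"
  proof (rule DERIV_nonpos_imp_nonincreasing[OF \<open>y \<le> 0\<close>])
    fix x :: real assume x: "y \<le> x" "x \<le> 0"
    then have "1 + x > 0" using assms by linarith
    then have "DERIV ?h x :> x * (1 + 2 * x) / (1 + x)"
      by (auto intro!: derivative_eq_intros simp: field_simps)
    moreover have "x * (1 + 2 * x) / (1 + x) \<le> 0"
      using x assms \<open>1 + x > 0\<close> by (intro divide_nonpos_pos mult_nonpos_nonneg) auto
    ultimately show "\<exists>d. DERIV ?h x :> d \<and> d \<le> 0" by blast
  qed
  then show ?thesis by simp
qed

lemma sum_minus_squares_le_ln_prod:
  fixes x :: "'i \<Rightarrow> real"
  assumes "finite I" and "\<And>i. i \<in> I \<Longrightarrow> \<bar>x i\<bar> \<le> 1/2"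
  shows "(\<Sum>i\<in>I. x i - (x i)^2) \<le> ln (\<Prod>i\<in>I. 1 + x i)"
proof -
  have pos: "1 + x i > 0" if "i \<in> I" for i using assms(2)[OF that] by linarith
  have "(\<Sum>i\<in>I. x i - (x i)^2) \<le> (\<Sum>i\<in>I. ln (1 + x i))"
    using assms(2) by (intro sum_mono ln_one_plus_ge_minus_square)
  also have "\<dots> = ln (\<Prod>i\<in>I. 1 + x i)"
    using assms(1) pos by (subst ln_prod) (auto dest: pos)
  finally show ?thesis .
qed

lemma abs_mult_le_half:
  fixes \<alpha> x :: real
  assumes "0 < \<alpha>" and "\<alpha> \<le> 1/4" and "\<bar>x\<bar> \<le> 2"
  shows "\<bar>\<alpha> * x\<bar> \<le> 1/2"
proof -
  have "\<alpha> * \<bar>x\<bar> \<le> 1/4 * 2" using assms by (intro mult_mono) auto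
  then show ?thesis using assms(1) by (simp add: abs_mult)
qed

lemma sum_le_of_prod_one_plus_le:
  fixes x :: "'i \<Rightarrow> real" and \<alpha> M :: real
  assumes "finite I" and "0 < \<alpha>" and "\<alpha> \<le> 1/4"
    and "\<And>i. i \<in> I \<Longrightarrow> \<bar>x i\<bar> \<le> 2"
    and "(\<Prod>i\<in>I. 1 + \<alpha> * x i) \<le> M" and "ln M \<le> \<alpha>^2 * real (card I)"
  shows "(\<Sum>i\<in>I. x i) \<le> 5 * \<alpha> * real (card I)"
proof -
  have small: "\<bar>\<alpha> * x i\<bar> \<le> 1/2" if "i \<in> I" for i
    using assms(2,3) assms(4)[OF that] by (rule abs_mult_le_half)
  have square: "(\<alpha> * x i)^2 \<le> 4 * \<alpha>^2" if "i \<in> I" for i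
  proof -
    have "\<bar>x i\<bar>^2 \<le> 2^2" using assms(4)[OF that] by (intro power_mono) auto
    then have "\<alpha>^2 * (x i)^2 \<le> \<alpha>^2 * 4" by (intro mult_left_mono) auto
    then show ?thesis by (simp add: power_mult_distrib)
  qed
  have "(\<Sum>i\<in>I. (\<alpha> * x i)^2) \<le> (\<Sum>i\<in>I. 4 * \<alpha>^2)"
    using square by (rule sum_mono)
  then have "\<alpha> * (\<Sum>i\<in>I. x i) - 4 * \<alpha>^2 * real (card I) \<le> (\<Sum>i\<in>I. \<alpha> * x i - (\<alpha> * x i)^2)"
    by (simp add: sum_subtractf sum_distrib_left mult.commute)
  also have "\<dots> \<le> ln (\<Prod>i\<in>I. 1 + \<alpha> * x i)"
    using assms(1) small by (rule sum_minus_squares_le_ln_prod)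
  also have "\<dots> \<le> ln M"
  proof -
    have "(\<Prod>i\<in>I. 1 + \<alpha> * x i) > 0"
      using small by (intro prod_pos) (fastforce simp: abs_le_iff)
    then show ?thesis using assms(5) by simp
  qed
  finally have "\<alpha> * (\<Sum>i\<in>I. x i) \<le> \<alpha> * (5 * \<alpha> * real (card I))"
    using assms(6) by (simp add: power2_eq_square algebra_simps)
  then show ?thesis using assms(2) by simp
qed

lemma inc_mult_sum_divide:
  assumes "finite I"
  shows "inc_mult E (\<lambda>e. (\<Sum>i\<in>I. g i e) / c) v = (\<Sum>i\<in>I. inc_mult E (g i) v) / c"
proof -
  define d where "d e = ((if fst e = v then 1 else 0) - (if snd e = v then 1 else 0) :: real)" for e
  have inc_mult_d: "inc_mult E f v = (\<Sum>e\<in>E. f e * d e)" for f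
    unfolding inc_mult_def d_def by (rule sum.cong) (auto simp: algebra_simps)
  have "inc_mult E (\<lambda>e. (\<Sum>i\<in>I. g i e) / c) v = (\<Sum>e\<in>E. \<Sum>i\<in>I. g i e * d e / c)"
    unfolding inc_mult_d by (simp add: sum_divide_distrib sum_distrib_right)
  also have "\<dots> = (\<Sum>i\<in>I. inc_mult E (g i) v) / c"
    unfolding inc_mult_d sum_divide_distrib by (rule sum.swap)
  finally show ?thesis .
qed

lemma abs_inc_mult_le_deg:
  assumes "finite E" and "\<And>e. \<bar>f e\<bar> \<le> 1"
  shows "\<bar>inc_mult E f v\<bar> \<le> real (deg E v)"
proof -
  have "\<bar>inc_mult E f v\<bar> \<le> (\<Sum>e\<in>E. \<bar>(if fst e = v then f e else 0) - (if snd e = v then f e else 0)\<bar>)"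
    unfolding inc_mult_def by (rule sum_abs)
  also have "\<dots> \<le> (\<Sum>e\<in>E. if fst e = v \<or> snd e = v then 1 else 0)"
    using assms(2) by (intro sum_mono) auto
  also have "\<dots> = real (deg E v)"
    unfolding deg_def using assms(1) by (simp add: sum.inter_filter[symmetric])
  finally show ?thesis .
qed

lemma abs_sc_flow_le_one: "\<bar>sc_flow phi e\<bar> \<le> 1"
  by (simp add: sc_flow_def)

lemma trunc_w_error:
  assumes "0 \<le> x"
  shows "0 \<le> x - trunc_w n x" and "x - trunc_w n x \<le> real n"
  using assms by (auto simp: trunc_w_def)

locale sc_setting =
  fixes V :: "'a set" and E :: "('a \<times> 'a) set" and b :: "'a \<Rightarrow> real" and \<alpha> :: real
  assumes finite_V: "finite V" and E_subset: "E \<subseteq> V \<times> V"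
    and deg_pos: "\<And>v. v \<in> V \<Longrightarrow> deg E v \<ge> 1"
    and abs_b_le: "\<And>v. v \<in> V \<Longrightarrow> \<bar>b v\<bar> \<le> real (deg E v)"
    and alpha_pos: "0 < \<alpha>" and alpha_le: "\<alpha> \<le> 1/4"
begin

abbreviation w :: "nat \<Rightarrow> ('a \<Rightarrow> real) \<times> ('a \<Rightarrow> real)" where
  "w \<equiv> sc_w V E b \<alpha>"

abbreviation r :: "nat \<Rightarrow> 'a \<Rightarrow> real" where
  "r i \<equiv> sc_res V E b (w i)"

definition total_weight :: "nat \<Rightarrow> real" where
  "total_weight i = (\<Sum>v\<in>V. fst (w i) v + snd (w i) v)"

lemma finite_E: "finite E"
  using E_subset finite_V by (meson finite_SigmaI finite_subset)

lemma sc_res_eq: "r i v = (b v - inc_mult E (sc_f V E b \<alpha> i) v) / real (deg E v)"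
  by (simp add: sc_res_def sc_f_def sc_phi_i_def)

lemma abs_sc_res_le:
  assumes "v \<in> V"
  shows "\<bar>r i v\<bar> \<le> 2"
proof -
  have "\<bar>inc_mult E (sc_f V E b \<alpha> i) v\<bar> \<le> real (deg E v)"
    unfolding sc_f_def by (rule abs_inc_mult_le_deg[OF finite_E abs_sc_flow_le_one])
  then have "\<bar>b v - inc_mult E (sc_f V E b \<alpha> i) v\<bar> \<le> 2 * real (deg E v)"
    using abs_b_le[OF assms] by linarith
  then show ?thesis
    using deg_pos[OF assms] by (simp add: sc_res_eq abs_divide pos_divide_le_eq)
qed

lemma sc_w_Suc_Suc: "w (Suc (Suc k)) = sc_step V E b \<alpha> (w (Suc k))"
  by (simp add: sc_w_def)

lemma sc_w_eq_prod:
  "fst (w (Suc k)) v = (\<Prod>i\<in>{1..k}. 1 + \<alpha> * r i v)"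
  "snd (w (Suc k)) v = (\<Prod>i\<in>{1..k}. 1 - \<alpha> * r i v)"
  by (induction k) (simp_all add: sc_w_def sc_w_Suc_Suc sc_step_def prod.nat_ivl_Suc' mult.commute)

lemma sc_w_pos:
  assumes "v \<in> V"
  shows "0 < fst (w (Suc k)) v" and "0 < snd (w (Suc k)) v"
proof -
  have small: "\<bar>\<alpha> * r i v\<bar> \<le> 1/2" for i
    using alpha_pos alpha_le abs_sc_res_le[OF assms] by (rule abs_mult_le_half)
  have "0 < 1 + \<alpha> * r i v" "0 < 1 - \<alpha> * r i v" for i
    using small[of i] unfolding abs_le_iff by linarith+
  then show "0 < fst (w (Suc k)) v" and "0 < snd (w (Suc k)) v"
    unfolding sc_w_eq_prod by (auto intro!: prod_pos)
qed

lemma sc_w_le_total_weight: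
  assumes "v \<in> V"
  shows "fst (w (Suc k)) v \<le> total_weight (Suc k)" and "snd (w (Suc k)) v \<le> total_weight (Suc k)"
proof -
  have "fst (w (Suc k)) v + snd (w (Suc k)) v \<le> total_weight (Suc k)"
    unfolding total_weight_def using assms finite_V
    by (intro member_le_sum[where f = "\<lambda>u. fst (w (Suc k)) u + snd (w (Suc k)) u"])
       (auto dest: sc_w_pos[of _ k] intro: add_nonneg_nonneg less_imp_le)
  then show "fst (w (Suc k)) v \<le> total_weight (Suc k)" "snd (w (Suc k)) v \<le> total_weight (Suc k)"
    using sc_w_pos[OF assms, of k] by auto
qed

lemma total_weight_Suc_Suc:
  "total_weight (Suc (Suc k)) =
     total_weight (Suc k) + \<alpha> * (\<Sum>v\<in>V. r (Suc k) v * (fst (w (Suc k)) v - snd (w (Suc k)) v))"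
  unfolding total_weight_def sc_w_Suc_Suc
  by (simp add: sc_step_def sum_distrib_left sum.distrib[symmetric] algebra_simps)

lemma sum_sc_res_mult_trunc_w:
  "(\<Sum>v\<in>V. r i v * (trunc_w (card V) (fst (w i) v) - trunc_w (card V) (snd (w i) v)))
     = vinner V (sc_phi_i V E b \<alpha> i) b - vinner V (sc_phi_i V E b \<alpha> i) (inc_mult E (sc_f V E b \<alpha> i))"
  unfolding vinner_def sum_subtractf[symmetric]
proof (rule sum.cong)
  fix v assume "v \<in> V"
  then have "real (deg E v) \<noteq> 0" using deg_pos by fastforce
  then show "r i v * (trunc_w (card V) (fst (w i) v) - trunc_w (card V) (snd (w i) v))
      = sc_phi_i V E b \<alpha> i v * b v - sc_phi_i V E b \<alpha> i v * inc_mult E (sc_f V E b \<alpha> i) v"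
    by (simp add: sc_res_eq sc_phi_i_def sc_phi_def field_simps)
qed simp

lemma total_weight_Suc_Suc_le:
  assumes "\<not> sc_terminates_at V E b \<alpha> (Suc k)"
  shows "total_weight (Suc (Suc k)) \<le> total_weight (Suc k) + real (card V) ^ 2"
proof -
  define n where "n = card V"
  define i where "i = Suc k"
  define err where "err v = (fst (w i) v - trunc_w n (fst (w i) v)) - (snd (w i) v - trunc_w n (snd (w i) v))" for v
  have "(\<Sum>v\<in>V. r i v * (fst (w i) v - snd (w i) v)) =
      (\<Sum>v\<in>V. r i v * (trunc_w n (fst (w i) v) - trunc_w n (snd (w i) v))) + (\<Sum>v\<in>V. r i v * err v)"
    by (simp add: err_def sum.distrib[symmetric] algebra_simps)
  also have "\<dots> \<le> 0 + (\<Sum>v\<in>V. 2 * real n)"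
  proof (rule add_mono)
    show "(\<Sum>v\<in>V. r i v * (trunc_w n (fst (w i) v) - trunc_w n (snd (w i) v))) \<le> 0"
      using assms by (simp add: sum_sc_res_mult_trunc_w n_def i_def sc_terminates_at_def)
    show "(\<Sum>v\<in>V. r i v * err v) \<le> (\<Sum>v\<in>V. 2 * real n)"
    proof (rule sum_mono)
      fix v assume v: "v \<in> V"
      have "\<bar>err v\<bar> \<le> real n"
        using trunc_w_error[of "fst (w i) v" n] trunc_w_error[of "snd (w i) v" n] sc_w_pos[OF v, of k]
        unfolding err_def i_def by linarith
      then have "\<bar>r i v\<bar> * \<bar>err v\<bar> \<le> 2 * real n"
        using abs_sc_res_le[OF v, of i] by (intro mult_mono) auto
      then show "r i v * err v \<le> 2 * real n" by (metis abs_ge_self abs_mult order_trans)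
    qed
  qed
  finally have "\<alpha> * (\<Sum>v\<in>V. r i v * (fst (w i) v - snd (w i) v)) \<le> (4 * \<alpha>) * (real n ^ 2 / 2)"
    using alpha_pos by (simp add: n_def power2_eq_square mult_left_mono)
  also have "\<dots> \<le> 1 * (real n ^ 2 / 2)"
    using alpha_le by (intro mult_right_mono) auto
  also have "\<dots> \<le> real n ^ 2" by simp
  finally show ?thesis by (simp add: total_weight_Suc_Suc n_def i_def)
qed

lemma total_weight_le:
  assumes "\<And>i. i \<in> {1..k} \<Longrightarrow> \<not> sc_terminates_at V E b \<alpha> i"
  shows "total_weight (Suc k) \<le> 2 * real (card V) + real k * real (card V) ^ 2"
  using assms
proof (induction k)
  case 0
  then show ?case by (simp add: total_weight_def sc_w_def)
next
  case (Suc k)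
  then show ?case using total_weight_Suc_Suc_le[of k] by (simp add: algebra_simps)
qed

lemma abs_sum_sc_res_le:
  assumes "v \<in> V"
    and "\<And>i. i \<in> {1..T} \<Longrightarrow> \<not> sc_terminates_at V E b \<alpha> i"
    and "ln (2 * real (card V) + 5 * real T * real (card V)^2) \<le> \<alpha>^2 * real T"
  shows "\<bar>\<Sum>i\<in>{1..T}. r i v\<bar> \<le> 5 * \<alpha> * real T"
proof -
  define M where "M = 2 * real (card V) + 5 * real T * real (card V)^2"
  have "total_weight (Suc T) \<le> 2 * real (card V) + real T * real (card V)^2"
    using total_weight_le[of T] assms(2) by simp
  moreover have "real T * real (card V)^2 \<le> 5 * real T * real (card V)^2" by simp
  ultimately have "total_weight (Suc T) \<le> M" unfolding M_def by linarith
  then have prod_le: "(\<Prod>i\<in>{1..T}. 1 + \<alpha> * (s * r i v)) \<le> M" if "s = 1 \<or> s = -1" for s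
    using sc_w_le_total_weight[OF assms(1), of T] that by (auto simp: sc_w_eq_prod)
  have "(\<Sum>i\<in>{1..T}. s * r i v) \<le> 5 * \<alpha> * real (card {1..T})" if s: "s = 1 \<or> s = -1" for s
  proof (rule sum_le_of_prod_one_plus_le[OF _ alpha_pos alpha_le _ prod_le[OF s]])
    show "\<bar>s * r i v\<bar> \<le> 2" for i using abs_sc_res_le[OF assms(1)] s by auto
    show "ln M \<le> \<alpha>^2 * real (card {1..T})" using assms(3) by (simp add: M_def)
  qed simp
  from this[of 1] this[of "-1"] show ?thesis by (simp add: sum_negf)
qed

lemma sc_fbar_residual:
  assumes "v \<in> V" and "T \<ge> 1"
  shows "b v - inc_mult E (sc_fbar V E b \<alpha> T) v = real (deg E v) * (\<Sum>i\<in>{1..T}. r i v) / real T"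
proof -
  have "inc_mult E (sc_fbar V E b \<alpha> T) v = (\<Sum>i\<in>{1..T}. inc_mult E (sc_f V E b \<alpha> i) v) / real T"
    unfolding sc_fbar_def by (rule inc_mult_sum_divide) simp
  moreover have "real (deg E v) \<noteq> 0" using deg_pos[OF assms(1)] by simp
  ultimately show ?thesis
    using assms(2) by (simp add: sc_res_eq sum_divide_distrib[symmetric] sum_subtractf field_simps)
qed

end

theorem lemma2p6:
  fixes V :: "'a set" and E :: "('a \<times> 'a) set" and b :: "'a \<Rightarrow> real"
    and \<alpha> :: real and T :: nat
  assumes "finite V" and "card V \<ge> 3"
    and "E \<subseteq> V \<times> V"
    and "\<And>u v. (u, v) \<in> E \<Longrightarrow> u \<noteq> v"
    and "\<And>u v. (u, v) \<in> E \<Longrightarrow> (v, u) \<notin> E"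
    and "\<And>v. v \<in> V \<Longrightarrow> deg E v \<ge> 1"
    and "\<And>v. v \<in> V \<Longrightarrow> \<bar>b v\<bar> \<le> real (deg E v)"
    and "0 < \<alpha>" and "\<alpha> \<le> 1/4"
    and "T \<ge> 1"
    and "\<alpha>^2 * real T \<ge> ln (2 * real (card V) + 5 * real T * real (card V)^2)"
    and "\<And>i. i \<in> {1..T} \<Longrightarrow> \<not> sc_terminates_at V E b \<alpha> i"
  shows "\<forall>v\<in>V. \<bar>b v - inc_mult E (sc_fbar V E b \<alpha> T) v\<bar> \<le> 5 * \<alpha> * real (deg E v)"
proof
  fix v assume v: "v \<in> V"
  interpret sc_setting V E b \<alpha>
    using assms by unfold_locales auto
  have "\<bar>b v - inc_mult E (sc_fbar V E b \<alpha> T) v\<bar> = real (deg E v) * \<bar>\<Sum>i\<in>{1..T}. r i v\<bar> / real T"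
    using sc_fbar_residual[OF v assms(10)] by (simp add: abs_mult)
  also have "\<dots> \<le> real (deg E v) * (5 * \<alpha> * real T) / real T"
    using abs_sum_sc_res_le[OF v assms(12,11)] by (intro divide_right_mono mult_left_mono) auto
  also have "\<dots> = 5 * \<alpha> * real (deg E v)"
    using assms(10) by simp
  finally show "\<bar>b v - inc_mult E (sc_fbar V E b \<alpha> T) v\<bar> \<le> 5 * \<alpha> * real (deg E v)" .
qed

end
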